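(* Let $A$ be a ring satisfying the irreducible intersection property, and let $\varphi: A\hookrightarrow B$ be an injective ring map (identify $A$ with its image) such that: (i) for every prime ideal $p\subset A$ there exists a prime ideal $q\subset B$ with $q\cap A=p$; (ii) for every prime ideal $q\subset B$, $(q\cap A)B=q$. Then $B$ satisfies the irreducible intersection property.
   Context: All rings are commutative with $1$. A ring $R$ satisfies the irreducible intersection property if for any prime ideals $p_1,p_2\subset R$, either $p_1+p_2=R$ or $p_1+p_2$ is a prime ideal. For a ring map $A\to B$ and an ideal $J$ of $B$, $J\cap A$ denotes the preimage of $J$ in $A$, and for an ideal $I$ of $A$, $IB$ is the ideal of $B$ generated by the image of $I$. *)

theory Defs
  imports "HOL-Algebra.Algebra"
begin

definition irreducible_intersection_property :: "('a, 'm) ring_scheme \<Rightarrow> bool" where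
  "irreducible_intersection_property R \<longleftrightarrow>
     (\<forall>p1 p2. primeideal p1 R \<longrightarrow> primeideal p2 R \<longrightarrow>
        (p1 <+>\<^bsub>R\<^esub> p2 = carrier R \<or> primeideal (p1 <+>\<^bsub>R\<^esub> p2) R))"

end

theory Submission
  imports Defs
begin

lemma (in ring) genideal_Un:
  assumes "U \<subseteq> carrier R" and "V \<subseteq> carrier R"
  shows "Idl (U \<union> V) = Idl U <+> Idl V"
proof -
  have idU: "ideal (Idl U) R" and idV: "ideal (Idl V) R"
    using assms by (simp_all add: genideal_ideal)
  have UV: "U \<union> V \<subseteq> carrier R"
    using assms by blast
  have "Idl (U \<union> V) \<subseteq> Idl (Idl U \<union> Idl V)"
    using ideal.Icarr[OF idU] ideal.Icarr[OF idV] genideal_self[OF assms(1)] genideal_self[OF assms(2)]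
    by (intro subset_Idl_subset) auto
  moreover have "Idl (Idl U \<union> Idl V) \<subseteq> Idl (U \<union> V)"
    using subset_Idl_subset[OF UV, of U] subset_Idl_subset[OF UV, of V]
    by (intro genideal_minimal genideal_ideal[OF UV]) auto
  ultimately show ?thesis
    using union_genideal[OF idU idV] by blast
qed

text \<open>Extending a subset or the ideal it generates gives the same ideal:
  the contraction of an ideal of S is an ideal of R, so it contains
  the ideal generated by any subset it contains.\<close>
lemma (in ring_hom_ring) extension_genideal:
  assumes "U \<subseteq> carrier R"
  shows "Idl\<^bsub>S\<^esub> (h ` (Idl U)) = Idl\<^bsub>S\<^esub> (h ` U)"
proof
  have hU: "h ` U \<subseteq> carrier S"
    using assms by auto
  have hIU: "h ` (Idl U) \<subseteq> carrier S"
    using ideal.Icarr[OF R.genideal_ideal[OF assms]] by auto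
  have "ideal {r \<in> carrier R. h r \<in> Idl\<^bsub>S\<^esub> (h ` U)} R"
    by (rule ideal_vimage[OF S.genideal_ideal[OF hU]])
  moreover have "U \<subseteq> {r \<in> carrier R. h r \<in> Idl\<^bsub>S\<^esub> (h ` U)}"
    using assms S.genideal_self[OF hU] by auto
  ultimately have "Idl U \<subseteq> {r \<in> carrier R. h r \<in> Idl\<^bsub>S\<^esub> (h ` U)}"
    by (rule R.genideal_minimal)
  then show "Idl\<^bsub>S\<^esub> (h ` (Idl U)) \<subseteq> Idl\<^bsub>S\<^esub> (h ` U)"
    by (intro S.genideal_minimal S.genideal_ideal[OF hU]) auto
  show "Idl\<^bsub>S\<^esub> (h ` U) \<subseteq> Idl\<^bsub>S\<^esub> (h ` (Idl U))"
    using hIU R.genideal_self[OF assms] by (intro S.subset_Idl_subset) auto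
qed

lemma (in ring_hom_ring) extension_add:
  assumes "ideal I R" and "ideal J R"
  shows "Idl\<^bsub>S\<^esub> (h ` (I <+>\<^bsub>R\<^esub> J)) = Idl\<^bsub>S\<^esub> (h ` I) <+>\<^bsub>S\<^esub> Idl\<^bsub>S\<^esub> (h ` J)"
proof -
  have carr: "I \<subseteq> carrier R" "J \<subseteq> carrier R"
    using assms by (simp_all add: ideal.Icarr subsetI)
  have "Idl\<^bsub>S\<^esub> (h ` (I <+>\<^bsub>R\<^esub> J)) = Idl\<^bsub>S\<^esub> (h ` (Idl (I \<union> J)))"
    by (simp add: R.union_genideal assms)
  also have "\<dots> = Idl\<^bsub>S\<^esub> (h ` I \<union> h ` J)"
    using carr by (simp add: extension_genideal image_Un)
  also have "\<dots> = Idl\<^bsub>S\<^esub> (h ` I) <+>\<^bsub>S\<^esub> Idl\<^bsub>S\<^esub> (h ` J)"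
    using carr by (intro S.genideal_Un) auto
  finally show ?thesis .
qed

lemma (in ring_hom_ring) extension_carrier:
  "Idl\<^bsub>S\<^esub> (h ` carrier R) = carrier S"
proof -
  have hR: "h ` carrier R \<subseteq> carrier S"
    by auto
  have "\<one>\<^bsub>S\<^esub> \<in> Idl\<^bsub>S\<^esub> (h ` carrier R)"
    using S.genideal_self[OF hR] by (metis R.one_closed hom_one image_eqI subsetD)
  then show ?thesis
    using ideal.one_imp_carrier[OF S.genideal_ideal[OF hR]] by blast
qed

theorem mainTheorem10:
  fixes A :: "('a, 'm) ring_scheme" and B :: "('b, 'n) ring_scheme" and \<phi> :: "'a \<Rightarrow> 'b"
  assumes "cring A" and "cring B"
    and "\<phi> \<in> ring_hom A B"
    and "inj_on \<phi> (carrier A)"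
    and "irreducible_intersection_property A"
    and "\<And>p. primeideal p A \<Longrightarrow>
           \<exists>q. primeideal q B \<and> {a \<in> carrier A. \<phi> a \<in> q} = p"
    and "\<And>q. primeideal q B \<Longrightarrow>
           Idl\<^bsub>B\<^esub> (\<phi> ` {a \<in> carrier A. \<phi> a \<in> q}) = q"
  shows "irreducible_intersection_property B"
  unfolding irreducible_intersection_property_def
proof (intro allI impI)
  interpret A: cring A by fact
  interpret B: cring B by fact
  interpret h: ring_hom_ring A B \<phi>
    using assms(3) by (intro ring_hom_ringI2) (simp_all add: A.ring_axioms B.ring_axioms)
  fix q1 q2 assume q1: "primeideal q1 B" and q2: "primeideal q2 B"
  define p1 where "p1 = {a \<in> carrier A. \<phi> a \<in> q1}"
  define p2 where "p2 = {a \<in> carrier A. \<phi> a \<in> q2}"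
  have p1: "primeideal p1 A" and p2: "primeideal p2 A"
    unfolding p1_def p2_def using h.primeideal_vimage assms(1) q1 q2 by blast+
  have sum_ext: "q1 <+>\<^bsub>B\<^esub> q2 = Idl\<^bsub>B\<^esub> (\<phi> ` (p1 <+>\<^bsub>A\<^esub> p2))"
    using h.extension_add p1 p2 assms(7)[OF q1] assms(7)[OF q2]
    unfolding p1_def p2_def by (simp add: primeideal.axioms(1))
  have "p1 <+>\<^bsub>A\<^esub> p2 = carrier A \<or> primeideal (p1 <+>\<^bsub>A\<^esub> p2) A"
    using assms(5) p1 p2 unfolding irreducible_intersection_property_def by blast
  then show "q1 <+>\<^bsub>B\<^esub> q2 = carrier B \<or> primeideal (q1 <+>\<^bsub>B\<^esub> q2) B"
  proof
    assume "p1 <+>\<^bsub>A\<^esub> p2 = carrier A"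
    then show ?thesis
      using sum_ext h.extension_carrier by simp
  next
    assume "primeideal (p1 <+>\<^bsub>A\<^esub> p2) A"
    then obtain Q where "primeideal Q B" and "{a \<in> carrier A. \<phi> a \<in> Q} = p1 <+>\<^bsub>A\<^esub> p2"
      using assms(6) by blast
    then show ?thesis
      using sum_ext assms(7) by metis
  qed
qed

end
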